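(* Let $b\ge0$ be an integer and let $t$ be a join node of a rooted nice tree decomposition of the Tanner graph $G$ with children $t_1,t_2$ ($B_t=B_{t_1}=B_{t_2}$). For $I\subseteq B_t^c$, $Q\subseteq B_t^v$, $d\in\{0,\dots,b\}$ let $$F_t(I,Q,d)=\min\{f_{t_1}(I_1,Q,d_1)+f_{t_2}(I_2,Q,d_2)-|Q|\},\qquad G_t(I,Q,d)=\sum g_{t_1}(I_1,Q,d_1)\,g_{t_2}(I_2,Q,d_2),$$ the minimum taken over all $(I_1,I_2,d_1,d_2)$ with $I_1,I_2\subseteq B_t^c$, $d_1,d_2\ge0$ integers, $I=I_1\oplus I_2\oplus\Gamma_o(G_t[Q\cup B_t^c])$ and $d=d_1+d_2$, and the sum over those tuples attaining the minimum. Then: if $Q\ne\emptyset$, $f_t(I,Q,d)=F_t(I,Q,d)$ and $g_t(I,Q,d)=G_t(I,Q,d)$; if $Q=\emptyset$, $f_t(I,Q,d)=\min\{F_t(I,Q,d),f_{t_1}(I,Q,d),f_{t_2}(I,Q,d)\}$ and $$g_t(I,Q,d)=\mathbb 1_{f_t=F_t}G_t(I,Q,d)+\mathbb 1_{f_t=f_{t_1}}g_{t_1}(I,Q,d)+\mathbb 1_{f_t=f_{t_2}}g_{t_2}(I,Q,d),$$ all functions evaluated at $(I,Q,d)$, where $\mathbb 1_{x=y}$ is $1$ if $x=y$ and $0$ otherwise (whenever the minimum is finite).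
   Context: $G=(\mathcal L\cup\mathcal R,E)$ is a Tanner graph (bipartite, variable nodes $\mathcal L$, check nodes $\mathcal R$). For a subgraph $H$ of $G$ and $S\subseteq\mathcal L$ in $H$, $H[S]$ is the subgraph of $H$ induced by $S$ together with its neighbours in $H$; for $L\subseteq\mathcal L$, $R\subseteq\mathcal R$, $H[L\cup R]$ is the subgraph of $H$ induced on the vertex set $L\cup R$. $\Gamma_o(\cdot)$ is the set of odd-degree check nodes in the indicated subgraph; $\oplus$ is symmetric difference. A trapping set is a nonempty subset of $\mathcal L$. A rooted nice tree decomposition $(T,(B_t))$ is a rooted tree decomposition (every vertex and edge lies in some bag; bags containing a given vertex form a connected subtree) where every node has at most two children, root and leaves have empty bags, a node with two children (join node) has the same bag as each child, and a node $t$ with one child $t'$ has $B_t=B_{t'}\cup\{v\}$ or $B_t=B_{t'}\setminus\{v\}$. For a node $t$: $B_t^c=B_t\cap\mathcal R$, $B_t^v=B_t\cap\mathcal L$; $G_t$ is the subgraph of $G$ induced on the union of the bags of all descendants of $t$ (including $t$); $\mathcal L(G_t)$ is its set of variable nodes. For $I\subseteq B_t^c$, $Q\subseteq B_t^v$ and an integer $d\ge0$, a trapping set $S$ has parameters $(I,Q,d)$ in $G_t$ if $S\subseteq\mathcal L(G_t)$, $S\cap B_t^v=Q$, $\Gamma_o(G_t[S])\cap B_t^c=I$ and $|\Gamma_o(G_t[S])\setminus I|=d$. $f_t(I,Q,d)$ is the minimum size of a trapping set with parameters $(I,Q,d)$ in $G_t$ ($+\infty$ if none), and $g_t(I,Q,d)$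 is the number of such trapping sets of size $f_t(I,Q,d)$ ($0$ if none). *)

theory Defs
  imports Main "HOL-Library.Extended_Nat"
begin

text \<open>Tanner graph: variable nodes L, check nodes R, edges E as pairs (variable, check).\<close>
definition tanner_graph :: "'v set \<Rightarrow> 'v set \<Rightarrow> ('v \<times> 'v) set \<Rightarrow> bool" where
  "tanner_graph L R E \<longleftrightarrow> finite L \<and> finite R \<and> L \<inter> R = {} \<and> E \<subseteq> L \<times> R"

type_synonym 'v graph = "'v set \<times> ('v \<times> 'v) set"

definition symdiff :: "'a set \<Rightarrow> 'a set \<Rightarrow> 'a set" where
  "symdiff A B = (A - B) \<union> (B - A)"

definition induced_on :: "'v graph \<Rightarrow> 'v set \<Rightarrow> 'v graph" where
  "induced_on H X = (fst H \<inter> X, snd H \<inter> (X \<times> X))"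

definition var_induced :: "'v graph \<Rightarrow> 'v set \<Rightarrow> 'v graph" where
  "var_induced H S = induced_on H (S \<union> {c. \<exists>v\<in>S. (v, c) \<in> snd H})"

definition odd_checks :: "'v set \<Rightarrow> 'v graph \<Rightarrow> 'v set" where
  "odd_checks R H = {c \<in> fst H \<inter> R. odd (card {v. (v, c) \<in> snd H})}"

definition child_rel :: "('n \<Rightarrow> 'n set) \<Rightarrow> ('n \<times> 'n) set" where
  "child_rel ch = {(x, y). y \<in> ch x}"

definition descendants :: "('n \<Rightarrow> 'n set) \<Rightarrow> 'n \<Rightarrow> 'n set" where
  "descendants ch t = {s. (t, s) \<in> (child_rel ch)\<^sup>*}"

definition rooted_tree :: "'n set \<Rightarrow> ('n \<Rightarrow> 'n set) \<Rightarrow> 'n \<Rightarrow> bool" where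
  "rooted_tree N ch r \<longleftrightarrow> finite N \<and> r \<in> N \<and> (\<forall>t\<in>N. ch t \<subseteq> N) \<and> (\<forall>t\<in>N. r \<notin> ch t)
     \<and> (\<forall>s\<in>N. s \<noteq> r \<longrightarrow> (\<exists>!t. t \<in> N \<and> s \<in> ch t))
     \<and> (\<forall>s\<in>N. (r, s) \<in> (child_rel ch)\<^sup>*)"

definition tree_connected :: "('n \<Rightarrow> 'n set) \<Rightarrow> 'n set \<Rightarrow> bool" where
  "tree_connected ch X \<longleftrightarrow>
     (\<forall>s\<in>X. \<forall>t\<in>X. (s, t) \<in> {(a, b). a \<in> X \<and> b \<in> X \<and> (b \<in> ch a \<or> a \<in> ch b)}\<^sup>*)"

definition tree_decomp :: "'v set \<Rightarrow> 'v set \<Rightarrow> ('v \<times> 'v) set \<Rightarrow> 'n set \<Rightarrow> ('n \<Rightarrow> 'n set)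
     \<Rightarrow> ('n \<Rightarrow> 'v set) \<Rightarrow> bool" where
  "tree_decomp L R E N ch B \<longleftrightarrow>
     (\<forall>t\<in>N. B t \<subseteq> L \<union> R)
     \<and> (\<forall>x\<in>L \<union> R. \<exists>t\<in>N. x \<in> B t)
     \<and> (\<forall>(u, w)\<in>E. \<exists>t\<in>N. u \<in> B t \<and> w \<in> B t)
     \<and> (\<forall>x\<in>L \<union> R. tree_connected ch {t \<in> N. x \<in> B t})"

definition nice_tree_decomp :: "'v set \<Rightarrow> 'v set \<Rightarrow> ('v \<times> 'v) set \<Rightarrow> 'n set \<Rightarrow> ('n \<Rightarrow> 'n set)
     \<Rightarrow> 'n \<Rightarrow> ('n \<Rightarrow> 'v set) \<Rightarrow> bool" where
  "nice_tree_decomp L R E N ch r B \<longleftrightarrow>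
     rooted_tree N ch r \<and> tree_decomp L R E N ch B \<and> B r = {}
     \<and> (\<forall>t\<in>N. card (ch t) \<le> 2
          \<and> (ch t = {} \<longrightarrow> B t = {})
          \<and> (card (ch t) = 2 \<longrightarrow> (\<forall>s\<in>ch t. B s = B t))
          \<and> (\<forall>t'. ch t = {t'} \<longrightarrow> (\<exists>v. B t = B t' \<union> {v} \<or> B t = B t' - {v})))"

definition Gt :: "('v \<times> 'v) set \<Rightarrow> ('n \<Rightarrow> 'n set) \<Rightarrow> ('n \<Rightarrow> 'v set) \<Rightarrow> 'n \<Rightarrow> 'v graph" where
  "Gt E ch B t = (let V = \<Union>(B ` descendants ch t) in (V, E \<inter> (V \<times> V)))"

definition has_params :: "'v set \<Rightarrow> 'v set \<Rightarrow> ('v \<times> 'v) set \<Rightarrow> ('n \<Rightarrow> 'n set) \<Rightarrow> ('n \<Rightarrow> 'v set)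
     \<Rightarrow> 'n \<Rightarrow> 'v set \<Rightarrow> 'v set \<Rightarrow> nat \<Rightarrow> 'v set \<Rightarrow> bool" where
  "has_params L R E ch B t I Q d S \<longleftrightarrow>
     S \<noteq> {} \<and> S \<subseteq> fst (Gt E ch B t) \<inter> L \<and> S \<inter> (B t \<inter> L) = Q
     \<and> odd_checks R (var_induced (Gt E ch B t) S) \<inter> (B t \<inter> R) = I
     \<and> card (odd_checks R (var_induced (Gt E ch B t) S) - I) = d"

definition ft :: "'v set \<Rightarrow> 'v set \<Rightarrow> ('v \<times> 'v) set \<Rightarrow> ('n \<Rightarrow> 'n set) \<Rightarrow> ('n \<Rightarrow> 'v set)
     \<Rightarrow> 'n \<Rightarrow> 'v set \<Rightarrow> 'v set \<Rightarrow> nat \<Rightarrow> enat" where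
  "ft L R E ch B t I Q d = (INF S \<in> {S. has_params L R E ch B t I Q d S}. enat (card S))"

definition gt :: "'v set \<Rightarrow> 'v set \<Rightarrow> ('v \<times> 'v) set \<Rightarrow> ('n \<Rightarrow> 'n set) \<Rightarrow> ('n \<Rightarrow> 'v set)
     \<Rightarrow> 'n \<Rightarrow> 'v set \<Rightarrow> 'v set \<Rightarrow> nat \<Rightarrow> nat" where
  "gt L R E ch B t I Q d =
     card {S. has_params L R E ch B t I Q d S \<and> enat (card S) = ft L R E ch B t I Q d}"

definition join_tuples :: "'v set \<Rightarrow> ('v \<times> 'v) set \<Rightarrow> ('n \<Rightarrow> 'n set) \<Rightarrow> ('n \<Rightarrow> 'v set)
     \<Rightarrow> 'n \<Rightarrow> 'v set \<Rightarrow> 'v set \<Rightarrow> nat \<Rightarrow> ('v set \<times> 'v set \<times> nat \<times> nat) set" where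
  "join_tuples R E ch B t I Q d = {(I1, I2, d1, d2). I1 \<subseteq> B t \<inter> R \<and> I2 \<subseteq> B t \<inter> R
       \<and> I = symdiff (symdiff I1 I2) (odd_checks R (induced_on (Gt E ch B t) (Q \<union> (B t \<inter> R))))
       \<and> d = d1 + d2}"

definition join_val :: "'v set \<Rightarrow> 'v set \<Rightarrow> ('v \<times> 'v) set \<Rightarrow> ('n \<Rightarrow> 'n set) \<Rightarrow> ('n \<Rightarrow> 'v set)
     \<Rightarrow> 'n \<Rightarrow> 'n \<Rightarrow> 'v set \<Rightarrow> ('v set \<times> 'v set \<times> nat \<times> nat) \<Rightarrow> enat" where
  "join_val L R E ch B t1 t2 Q x = (case x of (I1, I2, d1, d2) \<Rightarrow>
      ft L R E ch B t1 I1 Q d1 + ft L R E ch B t2 I2 Q d2 - enat (card Q))"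

definition Fjoin :: "'v set \<Rightarrow> 'v set \<Rightarrow> ('v \<times> 'v) set \<Rightarrow> ('n \<Rightarrow> 'n set) \<Rightarrow> ('n \<Rightarrow> 'v set)
     \<Rightarrow> 'n \<Rightarrow> 'n \<Rightarrow> 'n \<Rightarrow> 'v set \<Rightarrow> 'v set \<Rightarrow> nat \<Rightarrow> enat" where
  "Fjoin L R E ch B t t1 t2 I Q d =
     (INF x \<in> join_tuples R E ch B t I Q d. join_val L R E ch B t1 t2 Q x)"

definition Gjoin :: "'v set \<Rightarrow> 'v set \<Rightarrow> ('v \<times> 'v) set \<Rightarrow> ('n \<Rightarrow> 'n set) \<Rightarrow> ('n \<Rightarrow> 'v set)
     \<Rightarrow> 'n \<Rightarrow> 'n \<Rightarrow> 'n \<Rightarrow> 'v set \<Rightarrow> 'v set \<Rightarrow> nat \<Rightarrow> nat" where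
  "Gjoin L R E ch B t t1 t2 I Q d =
     (\<Sum>x \<in> {x \<in> join_tuples R E ch B t I Q d.
                join_val L R E ch B t1 t2 Q x = Fjoin L R E ch B t t1 t2 I Q d}.
        (case x of (I1, I2, d1, d2) \<Rightarrow> gt L R E ch B t1 I1 Q d1 * gt L R E ch B t2 I2 Q d2))"

end

theory Submission
  imports Defs
begin

(* At a join node the bag B t separates the two subtrees: the vertex sets V1 and V2 of G_t1 and
  G_t2 meet exactly in B t, and a check outside B t has all its neighbours on its own side.  So a
  trapping set S of G_t is the union of its traces S1 = S \<inter> V1 and S2 = S \<inter> V2, which overlap in
  Q = S \<inter> B t, and |S| = |S1| + |S2| - |Q|.  Outside the bag the odd checks of S are the disjoint
  union of those of S1 and S2; inside the bag, degrees add up except that edges from Q are counted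
  twice, which is the symmetric difference with the odd checks of G_t[Q \<union> B_t^c].  If Q is nonempty
  both traces are nonempty, and S \<mapsto> (S1, S2) is a bijection onto pairs of trapping sets with
  admissible parameters, so minimising and counting minimisers yields F_t and G_t.  If Q is empty,
  S may also lie inside a single subtree, which adds the terms of f_t1 and f_t2. *)

section \<open>Minimum-size members of a family of sets\<close>

definition min_card :: "'a set set \<Rightarrow> enat" where
  "min_card P = (INF S\<in>P. enat (card S))"

definition minimizers :: "'a set set \<Rightarrow> 'a set set" where
  "minimizers P = {S \<in> P. enat (card S) = min_card P}"

lemma min_card_le: "S \<in> P \<Longrightarrow> min_card P \<le> enat (card S)"
  unfolding min_card_def by (rule INF_lower)

lemma min_card_greatest: "(\<And>S. S \<in> P \<Longrightarrow> m \<le> enat (card S)) \<Longrightarrow> m \<le> min_card P"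
  unfolding min_card_def by (rule INF_greatest)

lemma min_card_empty [simp]: "min_card {} = \<infinity>"
  unfolding min_card_def by (simp add: top_enat_def)

lemma minimizers_nonempty:
  assumes "P \<noteq> {}"
  obtains S where "S \<in> minimizers P"
proof -
  have "min_card P \<in> (\<lambda>S. enat (card S)) ` P"
    unfolding min_card_def Inf_enat_def using assms by (auto intro: LeastI)
  then show ?thesis using that unfolding minimizers_def by auto
qed

lemma min_card_Un: "min_card (A \<union> B) = min (min_card A) (min_card B)"
  unfolding min_card_def by (simp add: INF_union inf_min)

lemma level_set_below_min_card:
  assumes "m \<le> min_card A"
  shows "{S \<in> A. enat (card S) = m} = (if m = min_card A then minimizers A else {})"
proof (cases "m = min_card A")
  case False
  with assms have "m < min_card A"
    by simp
  then show ?thesis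
    using False by (auto dest: min_card_le)
qed (simp add: minimizers_def)

lemma card_minimizers_Un:
  assumes "finite A" "finite B" "A \<inter> B = {}"
  shows "card (minimizers (A \<union> B)) =
      (if min_card (A \<union> B) = min_card A then card (minimizers A) else 0)
    + (if min_card (A \<union> B) = min_card B then card (minimizers B) else 0)"
proof -
  let ?m = "min_card (A \<union> B)"
  have "minimizers (A \<union> B) = {S \<in> A. enat (card S) = ?m} \<union> {S \<in> B. enat (card S) = ?m}"
    unfolding minimizers_def by auto
  then have "card (minimizers (A \<union> B))
      = card {S \<in> A. enat (card S) = ?m} + card {S \<in> B. enat (card S) = ?m}"
    using assms by (simp add: card_Un_disjoint disjoint_iff)
  moreover have "?m \<le> min_card A" "?m \<le> min_card B"
    unfolding min_card_Un by simp_all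
  ultimately show ?thesis
    by (simp add: level_set_below_min_card)
qed

lemma card_minimizers_Un3:
  assumes "finite A" "finite B" "finite C" "A \<inter> B = {}" "A \<inter> C = {}" "B \<inter> C = {}"
  shows "card (minimizers (A \<union> B \<union> C)) =
      (if min_card (A \<union> B \<union> C) = min_card A then card (minimizers A) else 0)
    + (if min_card (A \<union> B \<union> C) = min_card B then card (minimizers B) else 0)
    + (if min_card (A \<union> B \<union> C) = min_card C then card (minimizers C) else 0)"
proof -
  have "card (minimizers (A \<union> B \<union> C)) =
      (if min_card (A \<union> B \<union> C) = min_card (A \<union> B) then card (minimizers (A \<union> B)) else 0)
    + (if min_card (A \<union> B \<union> C) = min_card C then card (minimizers C) else 0)"
    using assms by (intro card_minimizers_Un) auto
  moreover have "card (minimizers (A \<union> B)) =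
      (if min_card (A \<union> B) = min_card A then card (minimizers A) else 0)
    + (if min_card (A \<union> B) = min_card B then card (minimizers B) else 0)"
    using assms by (intro card_minimizers_Un) auto
  ultimately show ?thesis
    unfolding min_card_Un by (auto simp: min_def)
qed

definition glue :: "'x set \<Rightarrow> ('x \<Rightarrow> 'a set set) \<Rightarrow> ('x \<Rightarrow> 'a set set) \<Rightarrow> 'a set set" where
  "glue T P1 P2 = (\<Union>x\<in>T. (\<lambda>(S1, S2). S1 \<union> S2) ` (P1 x \<times> P2 x))"

locale unique_gluing =
  fixes T :: "'x set" and P1 P2 :: "'x \<Rightarrow> 'a set set" and k :: nat
  assumes finite_T: "finite T"
    and finite_P1: "\<And>x. x \<in> T \<Longrightarrow> finite (P1 x)"
    and finite_P2: "\<And>x. x \<in> T \<Longrightarrow> finite (P2 x)"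
    and card_Un: "\<And>x S1 S2. x \<in> T \<Longrightarrow> S1 \<in> P1 x \<Longrightarrow> S2 \<in> P2 x \<Longrightarrow>
        card (S1 \<union> S2) + k = card S1 + card S2"
    and Un_inj: "\<And>x y S1 S2 S1' S2'. x \<in> T \<Longrightarrow> y \<in> T \<Longrightarrow> S1 \<in> P1 x \<Longrightarrow> S2 \<in> P2 x \<Longrightarrow>
        S1' \<in> P1 y \<Longrightarrow> S2' \<in> P2 y \<Longrightarrow> S1 \<union> S2 = S1' \<union> S2' \<Longrightarrow> x = y \<and> S1 = S1' \<and> S2 = S2'"
begin

abbreviation glue_val :: "'x \<Rightarrow> enat" where
  "glue_val x \<equiv> min_card (P1 x) + min_card (P2 x) - enat k"

lemma glue_val_le:
  assumes "x \<in> T" "S1 \<in> P1 x" "S2 \<in> P2 x"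
  shows "glue_val x \<le> enat (card (S1 \<union> S2))"
proof -
  have "glue_val x \<le> enat (card S1) + enat (card S2) - enat k"
    using min_card_le[OF assms(2)] min_card_le[OF assms(3)]
    by (cases "min_card (P1 x)"; cases "min_card (P2 x)") auto
  also have "\<dots> = enat (card (S1 \<union> S2))"
    using card_Un[OF assms] by simp
  finally show ?thesis .
qed

lemma glue_val_eq_iff:
  assumes "x \<in> T" "S1 \<in> P1 x" "S2 \<in> P2 x"
  shows "glue_val x = enat (card (S1 \<union> S2)) \<longleftrightarrow>
    S1 \<in> minimizers (P1 x) \<and> S2 \<in> minimizers (P2 x)"
proof
  assume val: "glue_val x = enat (card (S1 \<union> S2))"
  have "P1 x \<noteq> {}" "P2 x \<noteq> {}"
    using assms by auto
  then obtain A1 A2 where "A1 \<in> minimizers (P1 x)" "A2 \<in> minimizers (P2 x)"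
    by (metis minimizers_nonempty)
  then have A: "A1 \<in> P1 x" "A2 \<in> P2 x"
    and min: "min_card (P1 x) = enat (card A1)" "min_card (P2 x) = enat (card A2)"
    unfolding minimizers_def by auto
  have le: "card A1 \<le> card S1" "card A2 \<le> card S2"
    using min_card_le[OF assms(2)] min_card_le[OF assms(3)] min by auto
  have "card A1 + card A2 - k = card (S1 \<union> S2)"
    using val min by simp
  then have "card A1 + card A2 = card S1 + card S2"
    using card_Un[OF assms(1) A] card_Un[OF assms] by linarith
  then have "min_card (P1 x) = enat (card S1)" "min_card (P2 x) = enat (card S2)"
    using le min by auto
  then show "S1 \<in> minimizers (P1 x) \<and> S2 \<in> minimizers (P2 x)"
    using assms unfolding minimizers_def by auto
next
  assume "S1 \<in> minimizers (P1 x) \<and> S2 \<in> minimizers (P2 x)"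
  then have "min_card (P1 x) = enat (card S1)" "min_card (P2 x) = enat (card S2)"
    unfolding minimizers_def by auto
  then show "glue_val x = enat (card (S1 \<union> S2))"
    using card_Un[OF assms] by simp
qed

lemma glue_val_attained:
  assumes "x \<in> T" "glue_val x \<noteq> \<infinity>"
  obtains S1 S2 where "S1 \<in> P1 x" "S2 \<in> P2 x" "glue_val x = enat (card (S1 \<union> S2))"
proof -
  have "P1 x \<noteq> {}" "P2 x \<noteq> {}"
    using assms(2) by auto
  then obtain S1 S2 where "S1 \<in> minimizers (P1 x)" "S2 \<in> minimizers (P2 x)"
    by (metis minimizers_nonempty)
  then show ?thesis
    using that glue_val_eq_iff[OF assms(1)] unfolding minimizers_def by auto
qed

lemma min_card_glue: "min_card (glue T P1 P2) = (INF x\<in>T. glue_val x)"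
proof (rule antisym)
  show "min_card (glue T P1 P2) \<le> (INF x\<in>T. glue_val x)"
  proof (rule INF_greatest)
    fix x assume x: "x \<in> T"
    show "min_card (glue T P1 P2) \<le> glue_val x"
    proof (cases "glue_val x = \<infinity>")
      case False
      then obtain S1 S2 where "S1 \<in> P1 x" "S2 \<in> P2 x" "glue_val x = enat (card (S1 \<union> S2))"
        using glue_val_attained x by metis
      then show ?thesis
        using x min_card_le[of "S1 \<union> S2" "glue T P1 P2"] unfolding glue_def by force
    qed simp
  qed
  show "(INF x\<in>T. glue_val x) \<le> min_card (glue T P1 P2)"
    unfolding glue_def
    by (auto intro!: min_card_greatest INF_lower2 glue_val_le)
qed

lemma minimizers_glue:
  "minimizers (glue T P1 P2) = (\<Union>x\<in>{x \<in> T. glue_val x = min_card (glue T P1 P2)}.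
     (\<lambda>(S1, S2). S1 \<union> S2) ` (minimizers (P1 x) \<times> minimizers (P2 x)))"
  (is "?lhs = ?rhs")
proof
  show "?lhs \<subseteq> ?rhs"
  proof
    fix S assume S: "S \<in> ?lhs"
    then obtain x S1 S2 where x: "x \<in> T" "S1 \<in> P1 x" "S2 \<in> P2 x" and S_eq: "S = S1 \<union> S2"
      unfolding minimizers_def glue_def by auto
    have "(INF x\<in>T. glue_val x) \<le> glue_val x"
      using x(1) by (rule INF_lower)
    moreover have "glue_val x \<le> enat (card S)"
      using glue_val_le[OF x] S_eq by simp
    ultimately have "glue_val x = enat (card S)" "glue_val x = min_card (glue T P1 P2)"
      using S unfolding minimizers_def min_card_glue by auto
    then show "S \<in> ?rhs"
      using glue_val_eq_iff[OF x] x(1) S_eq by auto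
  qed
  show "?rhs \<subseteq> ?lhs"
  proof
    fix S assume "S \<in> ?rhs"
    then obtain x S1 S2 where x: "x \<in> T" "S1 \<in> minimizers (P1 x)" "S2 \<in> minimizers (P2 x)"
      and val: "glue_val x = min_card (glue T P1 P2)" and S_eq: "S = S1 \<union> S2"
      by auto
    then have "S1 \<in> P1 x" "S2 \<in> P2 x"
      unfolding minimizers_def by auto
    then show "S \<in> ?lhs"
      using glue_val_eq_iff x val S_eq unfolding minimizers_def glue_def by force
  qed
qed

lemma card_minimizers_glue:
  "card (minimizers (glue T P1 P2)) = (\<Sum>x\<in>{x \<in> T. glue_val x = min_card (glue T P1 P2)}.
     card (minimizers (P1 x)) * card (minimizers (P2 x)))"
proof -
  let ?T = "{x \<in> T. glue_val x = min_card (glue T P1 P2)}"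
  let ?U = "\<lambda>(S1, S2). S1 \<union> S2"
  let ?M = "\<lambda>x. minimizers (P1 x) \<times> minimizers (P2 x)"
  have inj: "inj_on ?U (?M x)" if "x \<in> T" for x
  proof (rule inj_onI)
    fix p q
    assume "p \<in> ?M x" "q \<in> ?M x" "?U p = ?U q"
    moreover obtain S1 S2 S1' S2' where "p = (S1, S2)" "q = (S1', S2')"
      by fastforce
    ultimately show "p = q"
      using Un_inj[OF that that, of S1 S2 S1' S2'] unfolding minimizers_def by auto
  qed
  have "card (minimizers (glue T P1 P2)) = (\<Sum>x\<in>?T. card (?U ` ?M x))"
    unfolding minimizers_glue
  proof (rule card_UN_disjoint)
    show "finite ?T"
      using finite_T by simp
    show "\<forall>x\<in>?T. finite (?U ` ?M x)"
      using finite_P1 finite_P2 unfolding minimizers_def by simp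
    show "\<forall>x\<in>?T. \<forall>y\<in>?T. x \<noteq> y \<longrightarrow> ?U ` ?M x \<inter> ?U ` ?M y = {}"
    proof (intro ballI impI equals0I)
      fix x y S assume "x \<in> ?T" "y \<in> ?T" "x \<noteq> y" "S \<in> ?U ` ?M x \<inter> ?U ` ?M y"
      then obtain S1 S2 S1' S2' where "S1 \<in> minimizers (P1 x)" "S2 \<in> minimizers (P2 x)"
        "S1' \<in> minimizers (P1 y)" "S2' \<in> minimizers (P2 y)" "S1 \<union> S2 = S1' \<union> S2'"
        by auto
      then show False
        using Un_inj[of x y S1 S2 S1' S2'] \<open>x \<in> ?T\<close> \<open>y \<in> ?T\<close> \<open>x \<noteq> y\<close>
        unfolding minimizers_def by auto
    qed
  qed
  also have "\<dots> = (\<Sum>x\<in>?T. card (minimizers (P1 x)) * card (minimizers (P2 x)))"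
    by (intro sum.cong) (simp_all add: inj card_image card_cartesian_product)
  finally show ?thesis .
qed

end

section \<open>Parameters of trapping sets\<close>

definition odd_checks_on :: "'v set \<Rightarrow> ('v \<times> 'v) set \<Rightarrow> 'v set \<Rightarrow> 'v set \<Rightarrow> 'v set" where
  "odd_checks_on R E V S = {c \<in> V \<inter> R. odd (card {v \<in> S. (v, c) \<in> E})}"

lemma odd_checks_on_empty [simp]: "odd_checks_on R E V {} = {}"
  unfolding odd_checks_on_def by simp

lemma odd_checks_var_induced:
  assumes "tanner_graph L R E" and S: "S \<subseteq> V \<inter> L"
  shows "odd_checks R (var_induced (V, E \<inter> V \<times> V) S) = odd_checks_on R E V S"
proof -
  let ?W = "S \<union> {c. \<exists>v\<in>S. (v, c) \<in> E \<inter> V \<times> V}"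
  have E: "E \<subseteq> L \<times> R" "L \<inter> R = {}"
    using assms(1) unfolding tanner_graph_def by auto
  have deg: "{v. (v, c) \<in> E \<inter> V \<times> V \<inter> ?W \<times> ?W} = {v \<in> S. (v, c) \<in> E}"
    if "c \<in> V \<inter> R" "c \<in> ?W" for c
    using that E S by blast
  have odd_in_W: "c \<in> ?W" if "c \<in> V" "odd (card {v \<in> S. (v, c) \<in> E})" for c
  proof -
    have "{v \<in> S. (v, c) \<in> E} \<noteq> {}"
      using that(2) by (metis card.empty even_zero)
    then show ?thesis
      using that(1) S by blast
  qed
  have iff: "c \<in> V \<inter> ?W \<inter> R \<and> odd (card {v. (v, c) \<in> E \<inter> V \<times> V \<inter> ?W \<times> ?W})
      \<longleftrightarrow> c \<in> V \<inter> R \<and> odd (card {v \<in> S. (v, c) \<in> E})" for c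
  proof (cases "c \<in> V \<inter> R \<and> c \<in> ?W")
    case True
    then have deg_c: "{v. (v, c) \<in> E \<inter> V \<times> V \<inter> ?W \<times> ?W} = {v \<in> S. (v, c) \<in> E}"
      by (intro deg) auto
    show ?thesis
      unfolding deg_c using True by blast
  next
    case False
    then show ?thesis
      using odd_in_W[of c] by blast
  qed
  have induced: "var_induced (V, E \<inter> V \<times> V) S = (V \<inter> ?W, E \<inter> V \<times> V \<inter> ?W \<times> ?W)"
    unfolding var_induced_def induced_on_def by simp
  show ?thesis
    unfolding odd_checks_def odd_checks_on_def induced fst_conv snd_conv
    by (rule Collect_cong) (rule iff)
qed

lemma odd_checks_induced_bag:
  assumes "tanner_graph L R E" "Q \<subseteq> X \<inter> L" "X \<subseteq> V"
  shows "odd_checks R (induced_on (V, E \<inter> V \<times> V) (Q \<union> (X \<inter> R))) = odd_checks_on R E X Q"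
proof -
  have E: "E \<subseteq> L \<times> R" "L \<inter> R = {}"
    using assms(1) unfolding tanner_graph_def by auto
  have "{v. (v, c) \<in> E \<inter> V \<times> V \<inter> (Q \<union> X \<inter> R) \<times> (Q \<union> X \<inter> R)} = {v \<in> Q. (v, c) \<in> E}"
    if "c \<in> X \<inter> R" for c
    using that E assms(2,3) by blast
  moreover have "V \<inter> (Q \<union> X \<inter> R) \<inter> R = X \<inter> R"
    using E assms(2,3) by blast
  ultimately show ?thesis
    unfolding odd_checks_def induced_on_def odd_checks_on_def by auto
qed

(* Unlike has_params, this counts the odd checks outside the bag as OC - X rather than OC - I;
  the two agree because I is the trace of OC on the bag (has_params_iff_has_params_on). *)
definition has_params_on :: "'v set \<Rightarrow> 'v set \<Rightarrow> ('v \<times> 'v) set \<Rightarrow> 'v set \<Rightarrow> 'v set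
     \<Rightarrow> 'v set \<Rightarrow> 'v set \<Rightarrow> nat \<Rightarrow> 'v set \<Rightarrow> bool" where
  "has_params_on L R E V X I Q d S \<longleftrightarrow>
     S \<noteq> {} \<and> S \<subseteq> V \<inter> L \<and> S \<inter> X = Q
     \<and> odd_checks_on R E V S \<inter> X = I \<and> card (odd_checks_on R E V S - X) = d"

lemma finite_has_params_on: "finite V \<Longrightarrow> finite {S. has_params_on L R E V X I Q d S}"
  by (rule finite_subset[of _ "Pow V"]) (auto simp: has_params_on_def)

definition subtree_vertices :: "('n \<Rightarrow> 'n set) \<Rightarrow> ('n \<Rightarrow> 'v set) \<Rightarrow> 'n \<Rightarrow> 'v set" where
  "subtree_vertices ch B t = \<Union>(B ` descendants ch t)"

lemma Gt_eq_subtree_vertices: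
  "Gt E ch B t = (subtree_vertices ch B t, E \<inter> subtree_vertices ch B t \<times> subtree_vertices ch B t)"
  unfolding Gt_def subtree_vertices_def Let_def ..

lemma has_params_iff_has_params_on:
  assumes "tanner_graph L R E"
  shows "has_params L R E ch B t I Q d S \<longleftrightarrow>
    has_params_on L R E (subtree_vertices ch B t) (B t) I Q d S"
proof -
  let ?O = "odd_checks_on R E (subtree_vertices ch B t) S"
  have "?O \<subseteq> R" "S \<subseteq> L \<Longrightarrow> S \<inter> (B t \<inter> L) = S \<inter> B t"
    unfolding odd_checks_on_def by auto
  moreover have "?O \<inter> (B t \<inter> R) = ?O \<inter> B t" "?O - ?O \<inter> B t = ?O - B t"
    using calculation(1) by blast+
  ultimately show ?thesis
    using odd_checks_var_induced[OF assms, of S "subtree_vertices ch B t"]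
    unfolding has_params_def has_params_on_def Gt_eq_subtree_vertices by auto
qed

lemma ft_eq_min_card:
  assumes "tanner_graph L R E"
  shows "ft L R E ch B t I Q d =
    min_card {S. has_params_on L R E (subtree_vertices ch B t) (B t) I Q d S}"
proof -
  have "{S. has_params L R E ch B t I Q d S} =
      {S. has_params_on L R E (subtree_vertices ch B t) (B t) I Q d S}"
    by (auto simp: has_params_iff_has_params_on[OF assms])
  then show ?thesis
    unfolding ft_def min_card_def by simp
qed

lemma gt_eq_card_minimizers:
  assumes "tanner_graph L R E"
  shows "gt L R E ch B t I Q d =
    card (minimizers {S. has_params_on L R E (subtree_vertices ch B t) (B t) I Q d S})"
  unfolding gt_def minimizers_def
  by (simp add: has_params_iff_has_params_on[OF assms] ft_eq_min_card[OF assms])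

section \<open>Gluing along a separating bag\<close>

lemma odd_card_Un_iff:
  assumes "finite A" "finite B"
  shows "odd (card (A \<union> B)) \<longleftrightarrow> (odd (card A) \<noteq> odd (card B)) \<noteq> odd (card (A \<inter> B))"
  using card_Un_Int[OF assms] by presburger

locale bag_separation =
  fixes L R :: "'v set" and E :: "('v \<times> 'v) set" and V1 V2 X :: "'v set"
  assumes finite_V1: "finite V1" and finite_V2: "finite V2"
    and V1_Int_V2: "V1 \<inter> V2 = X"
    and edge_into_V1: "\<And>v c. (v, c) \<in> E \<Longrightarrow> c \<in> V1 - X \<Longrightarrow> v \<in> V1"
    and edge_into_V2: "\<And>v c. (v, c) \<in> E \<Longrightarrow> c \<in> V2 - X \<Longrightarrow> v \<in> V2"
begin

lemma bag_separation_swap: "bag_separation E V2 V1 X"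
  by unfold_locales (use finite_V1 finite_V2 V1_Int_V2 edge_into_V1 edge_into_V2 in auto)

abbreviation trapping_sets :: "'v set \<Rightarrow> 'v set \<Rightarrow> 'v set \<Rightarrow> nat \<Rightarrow> 'v set set" where
  "trapping_sets V I Q d \<equiv> {S. has_params_on L R E V X I Q d S}"

lemma odd_checks_on_Un_Int_bag:
  assumes "S \<subseteq> V1 \<union> V2"
  shows "odd_checks_on R E (V1 \<union> V2) S \<inter> X =
    symdiff (symdiff (odd_checks_on R E V1 (S \<inter> V1) \<inter> X) (odd_checks_on R E V2 (S \<inter> V2) \<inter> X))
      (odd_checks_on R E X (S \<inter> X))"
proof -
  have "finite S"
    using assms finite_V1 finite_V2 by (meson finite_UnI finite_subset)
  then have parity: "odd (card {v \<in> S. (v, c) \<in> E}) \<longleftrightarrow>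
      (odd (card {v \<in> S \<inter> V1. (v, c) \<in> E}) \<noteq> odd (card {v \<in> S \<inter> V2. (v, c) \<in> E}))
        \<noteq> odd (card {v \<in> S \<inter> X. (v, c) \<in> E})" for c
  proof -
    have "{v \<in> S. (v, c) \<in> E} = {v \<in> S \<inter> V1. (v, c) \<in> E} \<union> {v \<in> S \<inter> V2. (v, c) \<in> E}"
      using assms by blast
    moreover have "{v \<in> S \<inter> X. (v, c) \<in> E} = {v \<in> S \<inter> V1. (v, c) \<in> E} \<inter> {v \<in> S \<inter> V2. (v, c) \<in> E}"
      using V1_Int_V2 by blast
    ultimately show ?thesis
      using \<open>finite S\<close> by (simp add: odd_card_Un_iff)
  qed
  have "X \<subseteq> V1" "X \<subseteq> V2"
    using V1_Int_V2 by auto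
  then show ?thesis
    unfolding odd_checks_on_def symdiff_def using parity by auto
qed

lemma odd_checks_on_Un_diff_bag:
  assumes "S \<subseteq> V1 \<union> V2"
  shows "odd_checks_on R E (V1 \<union> V2) S - X =
    (odd_checks_on R E V1 (S \<inter> V1) - X) \<union> (odd_checks_on R E V2 (S \<inter> V2) - X)"
proof -
  have "{v \<in> S. (v, c) \<in> E} = {v \<in> S \<inter> V1. (v, c) \<in> E}" if "c \<in> V1 - X" for c
    using edge_into_V1 that by blast
  moreover have "{v \<in> S. (v, c) \<in> E} = {v \<in> S \<inter> V2. (v, c) \<in> E}" if "c \<in> V2 - X" for c
    using edge_into_V2 that by blast
  ultimately show ?thesis
    unfolding odd_checks_on_def by auto
qed

lemma card_odd_checks_on_Un_diff_bag:
  assumes "S \<subseteq> V1 \<union> V2"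
  shows "card (odd_checks_on R E (V1 \<union> V2) S - X) =
    card (odd_checks_on R E V1 (S \<inter> V1) - X) + card (odd_checks_on R E V2 (S \<inter> V2) - X)"
proof -
  have "odd_checks_on R E V1 (S \<inter> V1) - X \<subseteq> V1 - X" "odd_checks_on R E V2 (S \<inter> V2) - X \<subseteq> V2 - X"
    unfolding odd_checks_on_def by auto
  moreover have "(V1 - X) \<inter> (V2 - X) = {}"
    using V1_Int_V2 by auto
  ultimately show ?thesis
    unfolding odd_checks_on_Un_diff_bag[OF assms]
    using finite_V1 finite_V2 by (intro card_Un_disjoint) (auto intro: finite_subset)
qed

lemma has_params_on_Un_iff_left:
  assumes "S \<inter> V2 = {}"
  shows "has_params_on L R E (V1 \<union> V2) X I Q d S \<longleftrightarrow> has_params_on L R E V1 X I Q d S"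
proof (cases "S \<subseteq> V1")
  case True
  then have "S \<subseteq> V1 \<union> V2" "S \<inter> V1 = S" "S \<inter> X = {}"
    using assms V1_Int_V2 by auto
  then show ?thesis
    using odd_checks_on_Un_Int_bag[of S] odd_checks_on_Un_diff_bag[of S] assms True
    unfolding has_params_on_def by (simp add: symdiff_def)
next
  case False
  then show ?thesis
    using assms unfolding has_params_on_def by blast
qed

definition pair_tuples :: "'v set \<Rightarrow> 'v set \<Rightarrow> nat \<Rightarrow> ('v set \<times> 'v set \<times> nat \<times> nat) set" where
  "pair_tuples I Q d = {(I1, I2, d1, d2). I1 \<subseteq> X \<inter> R \<and> I2 \<subseteq> X \<inter> R
     \<and> I = symdiff (symdiff I1 I2) (odd_checks_on R E X Q) \<and> d = d1 + d2}"

definition left_pieces :: "'v set \<Rightarrow> 'v set \<times> 'v set \<times> nat \<times> nat \<Rightarrow> 'v set set" where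
  "left_pieces Q = (\<lambda>(I1, _, d1, _). trapping_sets V1 I1 Q d1)"

definition right_pieces :: "'v set \<Rightarrow> 'v set \<times> 'v set \<times> nat \<times> nat \<Rightarrow> 'v set set" where
  "right_pieces Q = (\<lambda>(_, I2, _, d2). trapping_sets V2 I2 Q d2)"

lemma left_pieces [simp]: "left_pieces Q (I1, I2, d1, d2) = trapping_sets V1 I1 Q d1"
  and right_pieces [simp]: "right_pieces Q (I1, I2, d1, d2) = trapping_sets V2 I2 Q d2"
  unfolding left_pieces_def right_pieces_def by simp_all

definition glued :: "'v set \<Rightarrow> 'v set \<Rightarrow> nat \<Rightarrow> 'v set set" where
  "glued I Q d = glue (pair_tuples I Q d) (left_pieces Q) (right_pieces Q)"

lemma has_params_on_parts:
  assumes "has_params_on L R E V1 X I1 Q d1 S1" "has_params_on L R E V2 X I2 Q d2 S2"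
  shows "(S1 \<union> S2) \<inter> V1 = S1" "(S1 \<union> S2) \<inter> V2 = S2" "(S1 \<union> S2) \<inter> X = Q" "S1 \<inter> S2 = Q"
  using assms V1_Int_V2 unfolding has_params_on_def by blast+

lemma has_params_on_glue:
  assumes "(I1, I2, d1, d2) \<in> pair_tuples I Q d"
    and S1: "has_params_on L R E V1 X I1 Q d1 S1" and S2: "has_params_on L R E V2 X I2 Q d2 S2"
  shows "has_params_on L R E (V1 \<union> V2) X I Q d (S1 \<union> S2)"
proof -
  note parts = has_params_on_parts[OF S1 S2]
  have sub: "S1 \<union> S2 \<subseteq> V1 \<union> V2"
    using S1 S2 unfolding has_params_on_def by auto
  have "odd_checks_on R E (V1 \<union> V2) (S1 \<union> S2) \<inter> X = I"
    using odd_checks_on_Un_Int_bag[OF sub] parts S1 S2 assms(1)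
    unfolding pair_tuples_def has_params_on_def by auto
  moreover have "card (odd_checks_on R E (V1 \<union> V2) (S1 \<union> S2) - X) = d"
    using card_odd_checks_on_Un_diff_bag[OF sub] parts S1 S2 assms(1)
    unfolding pair_tuples_def has_params_on_def by auto
  ultimately show ?thesis
    using S1 S2 parts unfolding has_params_on_def by auto
qed

lemma has_params_on_split:
  assumes S: "has_params_on L R E (V1 \<union> V2) X I Q d S" and "S \<inter> V1 \<noteq> {}" "S \<inter> V2 \<noteq> {}"
  defines "I1 \<equiv> odd_checks_on R E V1 (S \<inter> V1) \<inter> X" and "I2 \<equiv> odd_checks_on R E V2 (S \<inter> V2) \<inter> X"
    and "d1 \<equiv> card (odd_checks_on R E V1 (S \<inter> V1) - X)"
    and "d2 \<equiv> card (odd_checks_on R E V2 (S \<inter> V2) - X)"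
  shows "(I1, I2, d1, d2) \<in> pair_tuples I Q d"
    and "has_params_on L R E V1 X I1 Q d1 (S \<inter> V1)"
    and "has_params_on L R E V2 X I2 Q d2 (S \<inter> V2)"
proof -
  have sub: "S \<subseteq> V1 \<union> V2" and SX: "S \<inter> X = Q"
    using S unfolding has_params_on_def by auto
  have "S \<inter> V1 \<inter> X = Q" "S \<inter> V2 \<inter> X = Q"
    using SX V1_Int_V2 by auto
  then show "has_params_on L R E V1 X I1 Q d1 (S \<inter> V1)" "has_params_on L R E V2 X I2 Q d2 (S \<inter> V2)"
    using S assms(2,3) unfolding has_params_on_def I1_def I2_def d1_def d2_def by auto
  show "(I1, I2, d1, d2) \<in> pair_tuples I Q d"
    using S odd_checks_on_Un_Int_bag[OF sub] card_odd_checks_on_Un_diff_bag[OF sub] SX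
    unfolding pair_tuples_def has_params_on_def I1_def I2_def d1_def d2_def
    by (auto simp: odd_checks_on_def)
qed

lemma glued_eq: "glued I Q d = {S \<in> trapping_sets (V1 \<union> V2) I Q d. S \<inter> V1 \<noteq> {} \<and> S \<inter> V2 \<noteq> {}}"
proof (intro set_eqI iffI)
  fix S assume "S \<in> glued I Q d"
  then obtain I1 I2 d1 d2 S1 S2 where x: "(I1, I2, d1, d2) \<in> pair_tuples I Q d"
    and S1: "has_params_on L R E V1 X I1 Q d1 S1" and S2: "has_params_on L R E V2 X I2 Q d2 S2"
    and S_eq: "S = S1 \<union> S2"
    unfolding glued_def glue_def by auto
  have "has_params_on L R E (V1 \<union> V2) X I Q d S"
    unfolding S_eq by (rule has_params_on_glue[OF x S1 S2])
  moreover have "S \<inter> V1 \<noteq> {}" "S \<inter> V2 \<noteq> {}"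
    using S1 S2 has_params_on_parts(1,2)[OF S1 S2] unfolding S_eq has_params_on_def by auto
  ultimately show "S \<in> {S \<in> trapping_sets (V1 \<union> V2) I Q d. S \<inter> V1 \<noteq> {} \<and> S \<inter> V2 \<noteq> {}}"
    by simp
next
  fix S assume "S \<in> {S \<in> trapping_sets (V1 \<union> V2) I Q d. S \<inter> V1 \<noteq> {} \<and> S \<inter> V2 \<noteq> {}}"
  then have S: "has_params_on L R E (V1 \<union> V2) X I Q d S" "S \<inter> V1 \<noteq> {}" "S \<inter> V2 \<noteq> {}"
    by auto
  have S_eq: "S = (S \<inter> V1) \<union> (S \<inter> V2)"
    using S(1) unfolding has_params_on_def by auto
  note split = has_params_on_split[OF S]
  show "S \<in> glued I Q d"
    unfolding glued_def glue_def
    using split(2,3) S_eq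
    by (intro UN_I[OF split(1)] rev_image_eqI[of "(S \<inter> V1, S \<inter> V2)"]) auto
qed

lemma trapping_sets_Un_nonempty_bag:
  assumes "Q \<noteq> {}"
  shows "trapping_sets (V1 \<union> V2) I Q d = glued I Q d"
proof -
  have "S \<inter> V1 \<noteq> {} \<and> S \<inter> V2 \<noteq> {}" if "has_params_on L R E (V1 \<union> V2) X I Q d S" for S
    using that assms V1_Int_V2 unfolding has_params_on_def by blast
  then show ?thesis
    unfolding glued_eq by blast
qed

lemma trapping_sets_left_eq:
  "trapping_sets V1 I {} d = {S \<in> trapping_sets (V1 \<union> V2) I {} d. S \<inter> V2 = {}}"
proof -
  have "S \<inter> V2 = {}" if "has_params_on L R E V1 X I {} d S" for S
    using that V1_Int_V2 unfolding has_params_on_def by blast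
  then show ?thesis
    using has_params_on_Un_iff_left by auto
qed

lemma trapping_sets_right_eq:
  "trapping_sets V2 I {} d = {S \<in> trapping_sets (V1 \<union> V2) I {} d. S \<inter> V1 = {}}"
  using bag_separation.trapping_sets_left_eq[OF bag_separation_swap] by (simp add: Un_commute)

lemma min_card_trapping_sets_Un_empty_bag:
  "min_card (trapping_sets (V1 \<union> V2) I {} d) = min (min_card (glued I {} d))
     (min (min_card (trapping_sets V1 I {} d)) (min_card (trapping_sets V2 I {} d)))"
  and card_minimizers_trapping_sets_Un_empty_bag:
  "card (minimizers (trapping_sets (V1 \<union> V2) I {} d)) =
      (if min_card (trapping_sets (V1 \<union> V2) I {} d) = min_card (glued I {} d)
       then card (minimizers (glued I {} d)) else 0)
    + (if min_card (trapping_sets (V1 \<union> V2) I {} d) = min_card (trapping_sets V1 I {} d)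
       then card (minimizers (trapping_sets V1 I {} d)) else 0)
    + (if min_card (trapping_sets (V1 \<union> V2) I {} d) = min_card (trapping_sets V2 I {} d)
       then card (minimizers (trapping_sets V2 I {} d)) else 0)"
proof -
  have nonempty: "S \<noteq> {} \<and> S \<subseteq> V" if "has_params_on L R E V X I Q d S" for V Q S
    using that unfolding has_params_on_def by blast
  have partition: "trapping_sets (V1 \<union> V2) I {} d =
      glued I {} d \<union> trapping_sets V1 I {} d \<union> trapping_sets V2 I {} d"
    unfolding glued_eq trapping_sets_left_eq trapping_sets_right_eq by blast
  have disjoint: "glued I {} d \<inter> trapping_sets V1 I {} d = {}"
    "glued I {} d \<inter> trapping_sets V2 I {} d = {}"
    "trapping_sets V1 I {} d \<inter> trapping_sets V2 I {} d = {}"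
    unfolding glued_eq trapping_sets_left_eq trapping_sets_right_eq using nonempty by blast+
  have "finite (trapping_sets (V1 \<union> V2) I {} d)"
    using finite_V1 finite_V2 by (simp add: finite_has_params_on)
  then have "finite (glued I {} d)" "finite (trapping_sets V1 I {} d)"
    "finite (trapping_sets V2 I {} d)"
    unfolding partition by simp_all
  from card_minimizers_Un3[OF this disjoint]
  show "card (minimizers (trapping_sets (V1 \<union> V2) I {} d)) =
      (if min_card (trapping_sets (V1 \<union> V2) I {} d) = min_card (glued I {} d)
       then card (minimizers (glued I {} d)) else 0)
    + (if min_card (trapping_sets (V1 \<union> V2) I {} d) = min_card (trapping_sets V1 I {} d)
       then card (minimizers (trapping_sets V1 I {} d)) else 0)
    + (if min_card (trapping_sets (V1 \<union> V2) I {} d) = min_card (trapping_sets V2 I {} d)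
       then card (minimizers (trapping_sets V2 I {} d)) else 0)"
    unfolding partition .
  show "min_card (trapping_sets (V1 \<union> V2) I {} d) = min (min_card (glued I {} d))
     (min (min_card (trapping_sets V1 I {} d)) (min_card (trapping_sets V2 I {} d)))"
    unfolding partition by (simp add: min_card_Un min.assoc)
qed

lemma unique_gluing_pair_tuples:
  "unique_gluing (pair_tuples I Q d) (left_pieces Q) (right_pieces Q) (card Q)"
proof
  have "finite X"
    using V1_Int_V2 finite_V1 by blast
  moreover have "pair_tuples I Q d \<subseteq> Pow (X \<inter> R) \<times> Pow (X \<inter> R) \<times> {..d} \<times> {..d}"
    unfolding pair_tuples_def by auto
  ultimately show "finite (pair_tuples I Q d)"
    by (simp add: finite_subset)
  show "finite (left_pieces Q x)" "finite (right_pieces Q x)" for x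
    using finite_V1 finite_V2 by (cases x, simp add: finite_has_params_on)+
  show "card (S1 \<union> S2) + card Q = card S1 + card S2"
    if "x \<in> pair_tuples I Q d" "S1 \<in> left_pieces Q x" "S2 \<in> right_pieces Q x" for x S1 S2
  proof -
    obtain I1 I2 d1 d2 where "x = (I1, I2, d1, d2)"
      by (cases x)
    with that have S1: "has_params_on L R E V1 X I1 Q d1 S1"
      and S2: "has_params_on L R E V2 X I2 Q d2 S2"
      by auto
    then have "finite S1" "finite S2"
      using finite_V1 finite_V2 unfolding has_params_on_def by (auto intro: finite_subset)
    then show ?thesis
      using card_Un_Int[of S1 S2] has_params_on_parts(4)[OF S1 S2] by simp
  qed
  show "x = y \<and> S1 = S1' \<and> S2 = S2'"
    if "x \<in> pair_tuples I Q d" "y \<in> pair_tuples I Q d"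
      and "S1 \<in> left_pieces Q x" "S2 \<in> right_pieces Q x"
      and "S1' \<in> left_pieces Q y" "S2' \<in> right_pieces Q y"
      and "S1 \<union> S2 = S1' \<union> S2'" for x y S1 S2 S1' S2'
  proof -
    obtain I1 I2 d1 d2 where x: "x = (I1, I2, d1, d2)"
      by (cases x)
    obtain I1' I2' d1' d2' where y: "y = (I1', I2', d1', d2')"
      by (cases y)
    have S1: "has_params_on L R E V1 X I1 Q d1 S1" and S2: "has_params_on L R E V2 X I2 Q d2 S2"
      and S1': "has_params_on L R E V1 X I1' Q d1' S1'"
      and S2': "has_params_on L R E V2 X I2' Q d2' S2'"
      using that(3-6) unfolding x y by auto
    have "S1 = S1'"
      using has_params_on_parts(1)[OF S1 S2] has_params_on_parts(1)[OF S1' S2'] that(7) by simp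
    moreover have "S2 = S2'"
      using has_params_on_parts(2)[OF S1 S2] has_params_on_parts(2)[OF S1' S2'] that(7) by simp
    ultimately show ?thesis
      using S1 S2 S1' S2' unfolding x y has_params_on_def by auto
  qed
qed

end

section \<open>Rooted trees and tree decompositions\<close>

lemma rooted_tree_descendant_in:
  assumes "rooted_tree N ch r" "s \<in> N" "(s, s') \<in> (child_rel ch)\<^sup>*"
  shows "s' \<in> N"
  using assms(3) by induction (use assms(1,2) in \<open>auto simp: rooted_tree_def child_rel_def\<close>)

lemma rooted_tree_unique_parent:
  assumes "rooted_tree N ch r" "p \<in> N" "q \<in> N" "z \<in> ch p" "z \<in> ch q"
  shows "p = q"
proof -
  have "z \<in> N" "z \<noteq> r"
    using assms unfolding rooted_tree_def by blast+
  then have "\<exists>!t. t \<in> N \<and> z \<in> ch t"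
    using assms(1) unfolding rooted_tree_def by blast
  then show ?thesis
    using assms by blast
qed

lemma rooted_tree_acyclic:
  assumes tree: "rooted_tree N ch r" and "x \<in> N"
  shows "(x, x) \<notin> (child_rel ch)\<^sup>+"
proof -
  have r_in: "r \<in> N"
    using tree unfolding rooted_tree_def by blast
  have "(y, y) \<notin> (child_rel ch)\<^sup>+" if "(r, y) \<in> (child_rel ch)\<^sup>*" for y
    using that
  proof (induction rule: rtrancl_induct)
    case base
    show ?case
    proof
      assume "(r, r) \<in> (child_rel ch)\<^sup>+"
      then obtain p where "(r, p) \<in> (child_rel ch)\<^sup>*" "r \<in> ch p"
        by (auto dest: tranclD2 simp: child_rel_def)
      then show False
        using tree rooted_tree_descendant_in[OF tree r_in] unfolding rooted_tree_def by blast
    qed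
  next
    case (step y z)
    show ?case
    proof
      assume "(z, z) \<in> (child_rel ch)\<^sup>+"
      then obtain p where zp: "(z, p) \<in> (child_rel ch)\<^sup>*" and "z \<in> ch p"
        by (auto dest: tranclD2 simp: child_rel_def)
      moreover have "y \<in> N" "z \<in> N"
        using step.hyps rooted_tree_descendant_in[OF tree r_in]
        by (auto intro: rtrancl_into_rtrancl)
      moreover have "z \<in> ch y"
        using step.hyps(2) unfolding child_rel_def by simp
      ultimately have "p = y"
        using rooted_tree_unique_parent[OF tree] rooted_tree_descendant_in[OF tree] by blast
      then have "(y, y) \<in> (child_rel ch)\<^sup>+"
        using step.hyps(2) zp by (simp add: rtrancl_into_trancl2)
      with step.IH show False ..
    qed
  qed
  then show ?thesis
    using tree \<open>x \<in> N\<close> unfolding rooted_tree_def by blast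
qed

lemma rooted_tree_common_descendant:
  assumes tree: "rooted_tree N ch r" and "a \<in> N" "b \<in> N"
    and "(a, y) \<in> (child_rel ch)\<^sup>*" "(b, y) \<in> (child_rel ch)\<^sup>*"
  shows "(a, b) \<in> (child_rel ch)\<^sup>* \<or> (b, a) \<in> (child_rel ch)\<^sup>*"
  using assms(4,3,5)
proof (induction arbitrary: b rule: rtrancl_induct)
  case (step p y b)
  from step.prems(2) show ?case
  proof (cases rule: rtranclE)
    case base
    then show ?thesis
      using step.hyps by (metis rtrancl.rtrancl_into_rtrancl)
  next
    case (step p')
    have "p \<in> N" "p' \<in> N"
      using rooted_tree_descendant_in[OF tree] \<open>a \<in> N\<close> \<open>b \<in> N\<close> step.hyps(1) \<open>(b, p') \<in> _\<close>
      by blast+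
    then have "p = p'"
      using rooted_tree_unique_parent[OF tree] step.hyps(2) \<open>(p', y) \<in> _\<close>
      unfolding child_rel_def by blast
    then show ?thesis
      using step.IH[OF \<open>b \<in> N\<close>] \<open>(b, p') \<in> _\<close> by simp
  qed
qed simp

lemma descendants_children_disjoint:
  assumes tree: "rooted_tree N ch r" and "t \<in> N" "t1 \<in> ch t" "t2 \<in> ch t" "t1 \<noteq> t2"
  shows "descendants ch t1 \<inter> descendants ch t2 = {}"
proof (rule ccontr)
  have children_in: "t1 \<in> N" "t2 \<in> N"
    using assms unfolding rooted_tree_def by auto
  have not_below: False
    if ab: "(a, b) \<in> (child_rel ch)\<^sup>*" "a \<noteq> b" and "a \<in> ch t" "b \<in> ch t" "a \<in> N" for a b
  proof -
    obtain p where ap: "(a, p) \<in> (child_rel ch)\<^sup>*" and "b \<in> ch p"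
      using ab by (cases rule: rtranclE) (auto simp: child_rel_def)
    then have "p = t"
      using rooted_tree_unique_parent[OF tree] rooted_tree_descendant_in[OF tree \<open>a \<in> N\<close> ap]
        \<open>t \<in> N\<close> \<open>b \<in> ch t\<close> by blast
    moreover have "(t, a) \<in> child_rel ch"
      using \<open>a \<in> ch t\<close> unfolding child_rel_def by simp
    ultimately have "(t, t) \<in> (child_rel ch)\<^sup>+"
      using ap by (simp add: rtrancl_into_trancl2)
    then show False
      using rooted_tree_acyclic[OF tree \<open>t \<in> N\<close>] by simp
  qed
  assume "descendants ch t1 \<inter> descendants ch t2 \<noteq> {}"
  then obtain w where "(t1, w) \<in> (child_rel ch)\<^sup>*" "(t2, w) \<in> (child_rel ch)\<^sup>*"
    unfolding descendants_def by auto
  then show False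
    using rooted_tree_common_descendant[OF tree children_in] not_below assms(3-5) children_in
    by blast
qed

lemma descendants_unfold: "descendants ch t = insert t (\<Union>c\<in>ch t. descendants ch c)"
  unfolding descendants_def child_rel_def
  by (auto elim: converse_rtranclE intro: converse_rtrancl_into_rtrancl)

lemma tree_connected_crossing:
  assumes tree: "rooted_tree N ch r" and "t \<in> N" "c \<in> ch t"
    and conn: "tree_connected ch X" and "X \<subseteq> N"
    and "u \<in> X" "u \<in> descendants ch c" "w \<in> X" "w \<notin> descendants ch c"
  shows "t \<in> X"
proof -
  let ?step = "{(a, b). a \<in> X \<and> b \<in> X \<and> (b \<in> ch a \<or> a \<in> ch b)}"
  have "c \<in> N"
    using tree \<open>t \<in> N\<close> \<open>c \<in> ch t\<close> unfolding rooted_tree_def by auto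
  have "y \<in> descendants ch c \<or> t \<in> X" if "(u, y) \<in> ?step\<^sup>*" for y
    using that
  proof (induction rule: rtrancl_induct)
    case base
    then show ?case
      using \<open>u \<in> descendants ch c\<close> by simp
  next
    case (step a b)
    have "a \<in> N" "b \<in> N"
      using step.hyps(2) \<open>X \<subseteq> N\<close> by auto
    consider "t \<in> X" | "a \<in> descendants ch c" "b \<in> ch a" | "a \<in> descendants ch c" "a \<in> ch b"
      using step.IH step.hyps(2) by auto
    then show ?case
    proof cases
      case 2
      then show ?thesis
        unfolding descendants_def child_rel_def by (auto intro: rtrancl_into_rtrancl)
    next
      case 3
      show ?thesis
      proof (cases "a = c")
        case True
        then have "b = t"
          using rooted_tree_unique_parent[OF tree \<open>b \<in> N\<close> \<open>t \<in> N\<close>] 3(2) \<open>c \<in> ch t\<close> by simp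
        then show ?thesis
          using step.hyps(2) by simp
      next
        case False
        then obtain p where cp: "(c, p) \<in> (child_rel ch)\<^sup>*" and "a \<in> ch p"
          using 3(1) unfolding descendants_def
          by (auto elim: rtranclE simp: child_rel_def)
        then have "p = b"
          using rooted_tree_unique_parent[OF tree _ \<open>b \<in> N\<close>]
            rooted_tree_descendant_in[OF tree \<open>c \<in> N\<close> cp] 3(2)
          by blast
        then show ?thesis
          using cp unfolding descendants_def by simp
      qed
    qed simp
  qed
  then show ?thesis
    using conn \<open>u \<in> X\<close> \<open>w \<in> X\<close> \<open>w \<notin> descendants ch c\<close> unfolding tree_connected_def by blast
qed

lemma bag_crossing:
  assumes tree: "rooted_tree N ch r" and decomp: "tree_decomp L R E N ch B"
    and "t \<in> N" "c \<in> ch t"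
    and "s1 \<in> descendants ch c" "x \<in> B s1" "s2 \<in> N" "s2 \<notin> descendants ch c" "x \<in> B s2"
  shows "x \<in> B t"
proof -
  have "c \<in> N"
    using tree \<open>t \<in> N\<close> \<open>c \<in> ch t\<close> unfolding rooted_tree_def by auto
  then have "s1 \<in> N"
    using rooted_tree_descendant_in[OF tree] \<open>s1 \<in> descendants ch c\<close>
    unfolding descendants_def by blast
  then have "tree_connected ch {s \<in> N. x \<in> B s}"
    using decomp \<open>x \<in> B s1\<close> unfolding tree_decomp_def by blast
  then have "t \<in> {s \<in> N. x \<in> B s}"
    using tree_connected_crossing[OF tree \<open>t \<in> N\<close> \<open>c \<in> ch t\<close>] assms(5-9) \<open>s1 \<in> N\<close> by blast
  then show ?thesis
    by simp
qed

lemma subtree_vertices_children_Int: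
  assumes tree: "rooted_tree N ch r" and decomp: "tree_decomp L R E N ch B"
    and "t \<in> N" "t1 \<in> ch t" "t2 \<in> ch t" "t1 \<noteq> t2"
  shows "subtree_vertices ch B t1 \<inter> subtree_vertices ch B t2 \<subseteq> B t"
proof
  fix x assume "x \<in> subtree_vertices ch B t1 \<inter> subtree_vertices ch B t2"
  then obtain s1 s2 where "s1 \<in> descendants ch t1" "x \<in> B s1" "s2 \<in> descendants ch t2" "x \<in> B s2"
    unfolding subtree_vertices_def by blast
  moreover have "t2 \<in> N"
    using tree \<open>t \<in> N\<close> \<open>t2 \<in> ch t\<close> unfolding rooted_tree_def by auto
  moreover note descendants_children_disjoint[OF assms(1,3-6)]
  ultimately show "x \<in> B t"
    using bag_crossing[OF tree decomp \<open>t \<in> N\<close> \<open>t1 \<in> ch t\<close>] rooted_tree_descendant_in[OF tree]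
    unfolding descendants_def by blast
qed

lemma edge_into_subtree:
  assumes tree: "rooted_tree N ch r" and decomp: "tree_decomp L R E N ch B"
    and "t \<in> N" "c \<in> ch t" "(v, w) \<in> E" "w \<in> subtree_vertices ch B c - B t"
  shows "v \<in> subtree_vertices ch B c"
proof -
  obtain s where "s \<in> N" "v \<in> B s" "w \<in> B s"
    using decomp \<open>(v, w) \<in> E\<close> unfolding tree_decomp_def by blast
  moreover obtain s1 where "s1 \<in> descendants ch c" "w \<in> B s1"
    using \<open>w \<in> subtree_vertices ch B c - B t\<close> unfolding subtree_vertices_def by blast
  ultimately have "s \<in> descendants ch c"
    using bag_crossing[OF tree decomp \<open>t \<in> N\<close> \<open>c \<in> ch t\<close>] \<open>w \<in> subtree_vertices ch B c - B t\<close>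
    by blast
  then show ?thesis
    using \<open>v \<in> B s\<close> unfolding subtree_vertices_def by blast
qed

lemma finite_subtree_vertices:
  assumes "tanner_graph L R E" "rooted_tree N ch r" "tree_decomp L R E N ch B" "s \<in> N"
  shows "finite (subtree_vertices ch B s)"
proof -
  have "subtree_vertices ch B s \<subseteq> L \<union> R"
    using assms(3,4) rooted_tree_descendant_in[OF assms(2)]
    unfolding subtree_vertices_def descendants_def tree_decomp_def by blast
  then show ?thesis
    using assms(1) unfolding tanner_graph_def by (auto intro: finite_subset)
qed

section \<open>Join nodes\<close>

locale join_node =
  fixes L R :: "'v set" and E :: "('v \<times> 'v) set" and N :: "'n set" and ch :: "'n \<Rightarrow> 'n set"
    and r :: 'n and B :: "'n \<Rightarrow> 'v set" and t t1 t2 :: 'n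
  assumes tanner: "tanner_graph L R E" and nice: "nice_tree_decomp L R E N ch r B"
    and node: "t \<in> N" and children: "ch t = {t1, t2}" and distinct_children: "t1 \<noteq> t2"
begin

lemma tree: "rooted_tree N ch r" and decomp: "tree_decomp L R E N ch B"
  using nice unfolding nice_tree_decomp_def by auto

lemma bag_children: "B t1 = B t" "B t2 = B t"
  using nice node children distinct_children unfolding nice_tree_decomp_def by auto

lemma bag_subset_subtree_vertices: "B t \<subseteq> subtree_vertices ch B t1" "B t \<subseteq> subtree_vertices ch B t2"
  using bag_children unfolding subtree_vertices_def descendants_def by auto

lemma subtree_vertices_join:
  "subtree_vertices ch B t = subtree_vertices ch B t1 \<union> subtree_vertices ch B t2"
  using bag_subset_subtree_vertices descendants_unfold[of ch t]
  unfolding subtree_vertices_def children by auto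

sublocale bag_separation L R E "subtree_vertices ch B t1" "subtree_vertices ch B t2" "B t"
proof
  have "t1 \<in> N" "t2 \<in> N"
    using tree node children unfolding rooted_tree_def by auto
  then show "finite (subtree_vertices ch B t1)" "finite (subtree_vertices ch B t2)"
    using finite_subtree_vertices[OF tanner tree decomp] by simp_all
  show "subtree_vertices ch B t1 \<inter> subtree_vertices ch B t2 = B t"
    using subtree_vertices_children_Int[OF tree decomp node] bag_subset_subtree_vertices
      children distinct_children by auto
  show "v \<in> subtree_vertices ch B t1" if "(v, w) \<in> E" "w \<in> subtree_vertices ch B t1 - B t" for v w
    using edge_into_subtree[OF tree decomp node _ that] children by simp
  show "v \<in> subtree_vertices ch B t2" if "(v, w) \<in> E" "w \<in> subtree_vertices ch B t2 - B t" for v w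
    using edge_into_subtree[OF tree decomp node _ that] children by simp
qed

abbreviation V1 :: "'v set" where "V1 \<equiv> subtree_vertices ch B t1"
abbreviation V2 :: "'v set" where "V2 \<equiv> subtree_vertices ch B t2"

lemma ft_join_node: "ft L R E ch B t I Q d = min_card (trapping_sets (V1 \<union> V2) I Q d)"
  and gt_join_node: "gt L R E ch B t I Q d = card (minimizers (trapping_sets (V1 \<union> V2) I Q d))"
  by (simp_all add: ft_eq_min_card[OF tanner] gt_eq_card_minimizers[OF tanner]
      subtree_vertices_join)

lemma ft_children:
  "ft L R E ch B t1 I Q d = min_card (trapping_sets V1 I Q d)"
  "ft L R E ch B t2 I Q d = min_card (trapping_sets V2 I Q d)"
  by (simp_all add: ft_eq_min_card[OF tanner] bag_children)

lemma gt_children: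
  "gt L R E ch B t1 I Q d = card (minimizers (trapping_sets V1 I Q d))"
  "gt L R E ch B t2 I Q d = card (minimizers (trapping_sets V2 I Q d))"
  by (simp_all add: gt_eq_card_minimizers[OF tanner] bag_children)

lemma join_tuples_eq:
  assumes "Q \<subseteq> B t \<inter> L"
  shows "join_tuples R E ch B t I Q d = pair_tuples I Q d"
proof -
  have "B t \<subseteq> subtree_vertices ch B t"
    using bag_subset_subtree_vertices subtree_vertices_join by auto
  then have "odd_checks R (induced_on (Gt E ch B t) (Q \<union> (B t \<inter> R))) = odd_checks_on R E (B t) Q"
    unfolding Gt_eq_subtree_vertices using odd_checks_induced_bag[OF tanner assms] by simp
  then show ?thesis
    unfolding join_tuples_def pair_tuples_def by simp
qed

lemma join_val_eq:
  "join_val L R E ch B t1 t2 Q x =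
     min_card (left_pieces Q x) + min_card (right_pieces Q x) - enat (card Q)"
  by (cases x) (simp add: join_val_def ft_children)

lemma Fjoin_eq_min_card_glued:
  assumes "Q \<subseteq> B t \<inter> L"
  shows "Fjoin L R E ch B t t1 t2 I Q d = min_card (glued I Q d)"
  unfolding Fjoin_def join_tuples_eq[OF assms] join_val_eq glued_def
    unique_gluing.min_card_glue[OF unique_gluing_pair_tuples] ..

lemma Gjoin_eq_card_minimizers_glued:
  assumes "Q \<subseteq> B t \<inter> L"
  shows "Gjoin L R E ch B t t1 t2 I Q d = card (minimizers (glued I Q d))"
proof -
  have "(case x of (I1, I2, d1, d2) \<Rightarrow> gt L R E ch B t1 I1 Q d1 * gt L R E ch B t2 I2 Q d2) =
      card (minimizers (left_pieces Q x)) * card (minimizers (right_pieces Q x))" for x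
    by (cases x) (simp add: gt_children)
  then show ?thesis
    unfolding Gjoin_def Fjoin_eq_min_card_glued[OF assms] join_tuples_eq[OF assms] join_val_eq
      glued_def unique_gluing.card_minimizers_glue[OF unique_gluing_pair_tuples]
    by simp
qed

end

theorem mainTheorem13:
  fixes L R :: "'v set" and E :: "('v \<times> 'v) set"
    and N :: "'n set" and ch :: "'n \<Rightarrow> 'n set" and r :: 'n and B :: "'n \<Rightarrow> 'v set"
    and b d :: nat and t t1 t2 :: 'n and I Q :: "'v set"
  assumes "tanner_graph L R E"
    and "nice_tree_decomp L R E N ch r B"
    and "t \<in> N" and "ch t = {t1, t2}" and "t1 \<noteq> t2"
    and "I \<subseteq> B t \<inter> R" and "Q \<subseteq> B t \<inter> L" and "d \<le> b"
  shows "(Q \<noteq> {} \<longrightarrow>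
            ft L R E ch B t I Q d = Fjoin L R E ch B t t1 t2 I Q d
          \<and> gt L R E ch B t I Q d = Gjoin L R E ch B t t1 t2 I Q d)
       \<and> (Q = {} \<longrightarrow>
            ft L R E ch B t I Q d = min (Fjoin L R E ch B t t1 t2 I Q d)
                                      (min (ft L R E ch B t1 I Q d) (ft L R E ch B t2 I Q d))
          \<and> gt L R E ch B t I Q d =
              (if ft L R E ch B t I Q d = Fjoin L R E ch B t t1 t2 I Q d
               then Gjoin L R E ch B t t1 t2 I Q d else 0)
            + (if ft L R E ch B t I Q d = ft L R E ch B t1 I Q d then gt L R E ch B t1 I Q d else 0)
            + (if ft L R E ch B t I Q d = ft L R E ch B t2 I Q d then gt L R E ch B t2 I Q d else 0))"
proof -
  interpret join_node L R E N ch r B t t1 t2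
    using assms(1-5) by unfold_locales
  have F: "Fjoin L R E ch B t t1 t2 I Q d = min_card (glued I Q d)"
    and G: "Gjoin L R E ch B t t1 t2 I Q d = card (minimizers (glued I Q d))"
    using assms(7) by (rule Fjoin_eq_min_card_glued, rule Gjoin_eq_card_minimizers_glued)
  show ?thesis
  proof (cases "Q = {}")
    case True
    then show ?thesis
      unfolding ft_join_node gt_join_node ft_children gt_children F G
      using min_card_trapping_sets_Un_empty_bag card_minimizers_trapping_sets_Un_empty_bag
      by simp
  next
    case False
    then show ?thesis
      unfolding ft_join_node gt_join_node F G
      using trapping_sets_Un_nonempty_bag by simp
  qed
qed

end
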